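(* The collection $\mathcal Q_{tree}$ is UME-learnable.
   Context: Index the nodes of an infinite complete binary tree by $\mathbb N$ in level order: the root is $1$, and node $m$ has left child $2m$ and right child $2m+1$. For an infinite binary string $b=(b_1,b_2,\dots)\in\{0,1\}^{\mathbb N}$, its branch is the sequence of nodes $v_0(b)=1$, $v_j(b)=2v_{j-1}(b)+b_j$ for $j\ge1$. Let $q^{(b)}\in[0,1]^{\mathbb N}$ be given by $q^{(b)}_m=\tfrac23$ if $m=v_j(b)$ for some $j\ge0$ and $q^{(b)}_m=\tfrac13$ otherwise. $\mathcal Q_{tree}=\{\mathrm{Prod}(q^{(b)}):b\in\{0,1\}^{\mathbb N}\}$, where $\mathrm{Prod}(q)$ is the product measure on $\{0,1\}^{\mathbb N}$ with independent coordinates $X_m\sim\mathrm{Bernoulli}(q_m)$. A collection $\mathcal Q$ of probability measures on $\{0,1\}^{\mathbb N}$ is UME-learnable if there exist (measurable) estimators $\mathcal A_n:(\{0,1\}^{\mathbb N})^n\to[0,1]^{\mathbb N}$ such that for every $\mu\in\mathcal Q$, $\mathbb E_{S\sim\mu^n}\|\mathcal A_n(S)-\mathrm{Mean}(\mu)\|_\infty\to0$ as $n\to\infty$, where $S$ consists of $n$ i.i.d. draws from $\mu$ and $\mathrm{Mean}(\mu)_j=\mathbb E[X_j]$. *)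

theory Defs
  imports "HOL-Probability.Probability"
begin

definition cube :: "(nat \<Rightarrow> bool) measure" where
  "cube = PiM {1..} (\<lambda>_. count_space (UNIV :: bool set))"

definition Prod :: "(nat \<Rightarrow> real) \<Rightarrow> (nat \<Rightarrow> bool) measure" where
  "Prod q = PiM {1..} (\<lambda>m. measure_pmf (bernoulli_pmf (q m)))"

definition Mean :: "(nat \<Rightarrow> bool) measure \<Rightarrow> nat \<Rightarrow> real" where
  "Mean \<mu> j = (\<integral>x. (if x j then 1 else 0) \<partial>\<mu>)"

definition sample_space :: "nat \<Rightarrow> (nat \<Rightarrow> nat \<Rightarrow> bool) measure" where
  "sample_space n = PiM {..<n} (\<lambda>_. cube)"

definition UME_learnable :: "(nat \<Rightarrow> bool) measure set \<Rightarrow> bool" where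
  "UME_learnable Q \<longleftrightarrow>
     (\<exists>A :: nat \<Rightarrow> (nat \<Rightarrow> nat \<Rightarrow> bool) \<Rightarrow> nat \<Rightarrow> real.
        (\<forall>n j. j \<ge> 1 \<longrightarrow> (\<lambda>S. A n S j) \<in> borel_measurable (sample_space n)) \<and>
        (\<forall>n S j. S \<in> space (sample_space n) \<and> j \<ge> 1 \<longrightarrow> A n S j \<in> {0..1}) \<and>
        (\<forall>\<mu>\<in>Q. (\<lambda>n. \<integral>\<^sup>+ S. (\<Squnion>j\<in>{1..}. ennreal \<bar>A n S j - Mean \<mu> j\<bar>)
                            \<partial>(PiM {..<n} (\<lambda>_. \<mu>))) \<longlonglongrightarrow> 0))"

fun branch :: "(nat \<Rightarrow> bool) \<Rightarrow> nat \<Rightarrow> nat" where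
  "branch b 0 = 1"
| "branch b (Suc j) = 2 * branch b j + (if b (Suc j) then 1 else 0)"

definition qb :: "(nat \<Rightarrow> bool) \<Rightarrow> nat \<Rightarrow> real" where
  "qb b m = (if \<exists>j. m = branch b j then 2/3 else 1/3)"

definition Q_tree :: "(nat \<Rightarrow> bool) measure set" where
  "Q_tree = {Prod (qb b) | b. True}"

end

theory Submission
  imports Defs
begin

text \<open>
  Every node \<open>m\<close> has exactly \<open>2^(m-1)\<close> descendants \<open>m - 1\<close> levels below it, and the
  segment from such a descendant \<open>w\<close> up to \<open>m\<close> consists of \<open>m\<close> nodes. If \<open>m\<close> lies on the
  branch, one of these segments runs along the branch, so all its \<open>n m\<close> observed bits are
  Bernoulli(2/3); if \<open>m\<close> is off the branch, so is every node below it, and all bits on every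
  segment are Bernoulli(1/3). The estimator therefore answers 2/3 at \<open>m\<close> iff some segment
  below \<open>m\<close> shows a majority of ones. By Markov's inequality for \<open>(9/4)^(number of ones)\<close>
  and a union bound over the \<open>2^(m-1)\<close> segments, it errs at \<open>m\<close> with probability at most
  \<open>(2 (17/18)^n)^m\<close>, and summing over \<open>m\<close> bounds the expected sup-norm error by a geometric
  series tending to 0.
\<close>

section \<open>Bernoulli product measures\<close>

lemma prob_space_Prod: "prob_space (Prod q)"
  unfolding Prod_def by (intro prob_space_PiM prob_space_measure_pmf)

lemma sets_Prod: "sets (Prod q) = sets cube"
  unfolding Prod_def cube_def by (intro sets_PiM_cong) auto

lemma measurable_PiM_Prod_sample_space:
  "f \<in> borel_measurable (sample_space n) \<Longrightarrow> f \<in> borel_measurable (PiM {..<n} (\<lambda>_. Prod q))"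
  unfolding sample_space_def by (simp add: measurable_cong_sets[OF sets_PiM_cong[OF refl sets_Prod]])

lemma measurable_Prod_component:
  fixes g :: "bool \<Rightarrow> 'b::topological_space"
  assumes "1 \<le> u"
  shows "(\<lambda>x. g (x u)) \<in> borel_measurable (Prod q)"
  unfolding Prod_def using assms
  by (intro measurable_compose[OF measurable_component_singleton]) auto

lemma nn_integral_Prod_prod:
  fixes f :: "nat \<Rightarrow> bool \<Rightarrow> ennreal"
  assumes q: "\<And>u. 0 \<le> q u" "\<And>u. q u \<le> 1" and P_fin: "finite P" and P_sub: "P \<subseteq> {1..}"
  shows "(\<integral>\<^sup>+x. (\<Prod>u\<in>P. f u (x u)) \<partial>Prod q)
       = (\<Prod>u\<in>P. f u True * ennreal (q u) + f u False * ennreal (1 - q u))"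
proof -
  let ?M = "\<lambda>m. measure_pmf (bernoulli_pmf (q m))"
  interpret product_prob_space ?M "{1..}"
    by (intro product_prob_spaceI prob_space_measure_pmf)
  have P1: "u \<in> P \<Longrightarrow> 1 \<le> u" for u
    using P_sub by auto
  have "(\<integral>\<^sup>+x. (\<Prod>u\<in>P. f u (x u)) \<partial>Prod q)
      = (\<integral>\<^sup>+x. (\<lambda>y. \<Prod>u\<in>P. f u (y u)) (restrict x P) \<partial>PiM {1..} ?M)"
    unfolding Prod_def by (intro nn_integral_cong prod.cong) auto
  also have "\<dots> = (\<integral>\<^sup>+y. (\<Prod>u\<in>P. f u (y u)) \<partial>distr (PiM {1..} ?M) (PiM P ?M) (\<lambda>x. restrict x P))"
    by (rule nn_integral_distr[symmetric]) (rule measurable_restrict_subset, use P1 in auto)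
  also have "\<dots> = (\<integral>\<^sup>+y. (\<Prod>u\<in>P. f u (y u)) \<partial>PiM P ?M)"
    by (subst distr_PiM_restrict_finite) (use P_fin P1 in auto)
  also have "\<dots> = (\<Prod>u\<in>P. integral\<^sup>N (?M u) (f u))"
    by (rule product_nn_integral_prod) (use P_fin P1 in auto)
  also have "\<dots> = (\<Prod>u\<in>P. f u True * ennreal (q u) + f u False * ennreal (1 - q u))"
    using q by (intro prod.cong refl) simp
  finally show ?thesis .
qed

lemma Mean_Prod:
  assumes q: "\<And>u. 0 \<le> q u" "\<And>u. q u \<le> 1" and j: "1 \<le> j"
  shows "Mean (Prod q) j = q j"
proof -
  have "Mean (Prod q) j = enn2real (\<integral>\<^sup>+x. ennreal (if x j then 1 else 0) \<partial>Prod q)"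
    unfolding Mean_def
    by (rule integral_eq_nn_integral) (auto intro: measurable_Prod_component[OF j])
  also have "(\<integral>\<^sup>+x. ennreal (if x j then 1 else 0) \<partial>Prod q)
      = (\<integral>\<^sup>+x. (\<Prod>u\<in>{j}. (\<lambda>u y. ennreal (if y then 1 else 0)) u (x u)) \<partial>Prod q)"
    by simp
  also have "\<dots> = ennreal (q j)"
    by (subst nn_integral_Prod_prod[OF q]) (use j in auto)
  finally show ?thesis using q by simp
qed

lemma nn_integral_PiM_Prod_prod:
  fixes f :: "nat \<Rightarrow> bool \<Rightarrow> ennreal"
  assumes q: "\<And>u. 0 \<le> q u" "\<And>u. q u \<le> 1" and P_fin: "finite P" and P_sub: "P \<subseteq> {1..}"
  shows "(\<integral>\<^sup>+S. (\<Prod>i<n. \<Prod>u\<in>P. f u (S i u)) \<partial>PiM {..<n} (\<lambda>_. Prod q))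
       = (\<Prod>u\<in>P. f u True * ennreal (q u) + f u False * ennreal (1 - q u)) ^ n"
proof -
  have meas: "(\<lambda>x. \<Prod>u\<in>P. f u (x u)) \<in> borel_measurable (Prod q)"
    using P_sub by (intro borel_measurable_prod_ennreal measurable_Prod_component) auto
  have "(\<integral>\<^sup>+S. (\<Prod>i<n. \<Prod>u\<in>P. f u (S i u)) \<partial>PiM {..<n} (\<lambda>_. Prod q))
      = (\<Prod>i<n. \<integral>\<^sup>+x. (\<Prod>u\<in>P. f u (x u)) \<partial>Prod q)"
  proof -
    interpret product_prob_space "\<lambda>_. Prod q" "{..<n}"
      by (intro product_prob_spaceI prob_space_Prod)
    show ?thesis
      using meas by (intro product_nn_integral_prod) auto
  qed
  also have "\<dots> = (\<Prod>i<n. \<Prod>u\<in>P. f u True * ennreal (q u) + f u False * ennreal (1 - q u))"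
    by (intro prod.cong refl nn_integral_Prod_prod[OF q P_fin P_sub])
  finally show ?thesis
    by simp
qed

lemma emeasure_ge_le_nn_integral:
  fixes f :: "'a \<Rightarrow> real"
  assumes f: "f \<in> borel_measurable M" and c: "0 < c"
  shows "emeasure M {x \<in> space M. c \<le> f x} \<le> ennreal (1 / c) * (\<integral>\<^sup>+x. ennreal (f x) \<partial>M)"
proof -
  have "1 \<le> ennreal (1 / c) * ennreal (f x) \<longleftrightarrow> c \<le> f x" for x
    using c by (subst ennreal_mult'[symmetric]) (simp_all add: le_divide_eq_1_pos)
  then have "{x \<in> space M. c \<le> f x} = {x \<in> space M. 1 \<le> ennreal (1 / c) * ennreal (f x)}"
    by simp
  also have "emeasure M \<dots> \<le> ennreal (1 / c) * (\<integral>\<^sup>+x. ennreal (f x) * indicator (space M) x \<partial>M)"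
    using f by (intro nn_integral_Markov_inequality) auto
  also have "(\<integral>\<^sup>+x. ennreal (f x) * indicator (space M) x \<partial>M) = (\<integral>\<^sup>+x. ennreal (f x) \<partial>M)"
    by (intro nn_integral_cong) simp
  finally show ?thesis .
qed

section \<open>Product statistics of a sample\<close>

definition score :: "(bool \<Rightarrow> real) \<Rightarrow> nat \<Rightarrow> nat set \<Rightarrow> (nat \<Rightarrow> nat \<Rightarrow> bool) \<Rightarrow> real" where
  "score \<phi> n P S = (\<Prod>i<n. \<Prod>u\<in>P. \<phi> (S i u))"

lemma score_nonneg: "(\<And>x. 0 \<le> \<phi> x) \<Longrightarrow> 0 \<le> score \<phi> n P S"
  unfolding score_def by (intro prod_nonneg) auto

lemma measurable_score:
  assumes "P \<subseteq> {1..}"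
  shows "score \<phi> n P \<in> borel_measurable (sample_space n)"
  unfolding score_def sample_space_def cube_def using assms
  by (intro borel_measurable_prod measurable_compose[OF measurable_component_singleton]
        measurable_compose[OF measurable_component_singleton]) auto

lemma measurable_score_PiM_Prod:
  "P \<subseteq> {1..} \<Longrightarrow> score \<phi> n P \<in> borel_measurable (PiM {..<n} (\<lambda>_. Prod q))"
  by (intro measurable_PiM_Prod_sample_space measurable_score)

lemma nn_integral_score:
  assumes q: "\<And>u. 0 \<le> q u" "\<And>u. q u \<le> 1" and P: "finite P" "P \<subseteq> {1..}"
    and p: "0 \<le> p" "p \<le> 1" "\<And>u. u \<in> P \<Longrightarrow> q u = p" and \<phi>: "\<And>x. 0 \<le> \<phi> x"
  shows "(\<integral>\<^sup>+S. score \<phi> n P S \<partial>PiM {..<n} (\<lambda>_. Prod q))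
       = ennreal ((\<phi> True * p + \<phi> False * (1 - p)) ^ (card P * n))"
proof -
  have base: "0 \<le> \<phi> True * p + \<phi> False * (1 - p)"
    using p \<phi> by simp
  have "ennreal (score \<phi> n P S) = (\<Prod>i<n. \<Prod>u\<in>P. (\<lambda>u x. ennreal (\<phi> x)) u (S i u))" for S
    unfolding score_def using \<phi> by (simp add: prod_ennreal prod_nonneg)
  then have "(\<integral>\<^sup>+S. score \<phi> n P S \<partial>PiM {..<n} (\<lambda>_. Prod q))
      = (\<integral>\<^sup>+S. (\<Prod>i<n. \<Prod>u\<in>P. (\<lambda>u x. ennreal (\<phi> x)) u (S i u)) \<partial>PiM {..<n} (\<lambda>_. Prod q))"
    by (simp only:)
  also have "\<dots> = (\<Prod>u\<in>P. ennreal (\<phi> True) * ennreal (q u) + ennreal (\<phi> False) * ennreal (1 - q u)) ^ n"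
    by (rule nn_integral_PiM_Prod_prod[OF q P(1,2)])
  also have "\<dots> = (\<Prod>u\<in>P. ennreal (\<phi> True * p + \<phi> False * (1 - p))) ^ n"
    using p \<phi> by (intro arg_cong[where f="\<lambda>x. x ^ n"] prod.cong refl)
      (simp add: ennreal_mult ennreal_plus[symmetric])
  also have "\<dots> = ennreal ((\<phi> True * p + \<phi> False * (1 - p)) ^ (card P * n))"
    using base by (simp add: prod_ennreal ennreal_power power_mult)
  finally show ?thesis .
qed

lemma emeasure_score_ge:
  fixes n :: nat
  assumes q: "\<And>u. 0 \<le> q u" "\<And>u. q u \<le> 1" and P: "finite P" "P \<subseteq> {1..}"
    and p: "0 \<le> p" "p \<le> 1" "\<And>u. u \<in> P \<Longrightarrow> q u = p" and \<phi>: "\<And>x. 0 \<le> \<phi> x"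
    and c: "0 < c"
  defines "M \<equiv> PiM {..<n} (\<lambda>_. Prod q)"
  shows "emeasure M {S \<in> space M. c \<le> score \<phi> n P S}
           \<le> ennreal ((\<phi> True * p + \<phi> False * (1 - p)) ^ (card P * n) / c)"
proof -
  have "emeasure M {S \<in> space M. c \<le> score \<phi> n P S} \<le> ennreal (1 / c) * (\<integral>\<^sup>+S. score \<phi> n P S \<partial>M)"
    unfolding M_def by (intro emeasure_ge_le_nn_integral measurable_score_PiM_Prod P c)
  also have "\<dots> = ennreal (1 / c) * ennreal ((\<phi> True * p + \<phi> False * (1 - p)) ^ (card P * n))"
    unfolding M_def by (simp only: nn_integral_score[OF q P p \<phi>])
  also have "\<dots> = ennreal ((\<phi> True * p + \<phi> False * (1 - p)) ^ (card P * n) / c)"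
    using c by (subst ennreal_mult'[symmetric]) simp_all
  finally show ?thesis .
qed

section \<open>Segments of the binary tree\<close>

lemma branch_bounds: "2 ^ k \<le> branch b k \<and> branch b k < 2 ^ Suc k"
  by (induction k) auto

lemma branch_add_div_power: "branch b (k + s) div 2 ^ s = branch b k"
proof (induction s)
  case (Suc s)
  have "branch b (k + Suc s) div 2 ^ Suc s = (branch b (k + Suc s) div 2) div 2 ^ s"
    by (simp only: power_Suc div_mult2_eq)
  then show ?case using Suc by simp
qed simp

lemma ancestor_of_branch_in_branch:
  assumes "branch b k div 2 ^ s = m" and "1 \<le> m"
  shows "m \<in> range (branch b)"
proof (cases "s \<le> k")
  case True
  then show ?thesis
    using assms(1) branch_add_div_power[of b "k - s" s] by simp
next
  case False
  have "branch b k < 2 ^ s"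
    using branch_bounds[of k b] False power_increasing[of "Suc k" s "2::nat"] by simp
  then show ?thesis using assms by simp
qed

text \<open>For \<open>w \<in> deep_descendants m\<close>, \<open>segment m w\<close> is the path from \<open>w\<close> up to \<open>m\<close>.\<close>

definition deep_descendants :: "nat \<Rightarrow> nat set" where
  "deep_descendants m = {m * 2 ^ (m - 1) ..< (m + 1) * 2 ^ (m - 1)}"

definition segment :: "nat \<Rightarrow> nat \<Rightarrow> nat set" where
  "segment m w = (\<lambda>t. w div 2 ^ t) ` {..<m}"

lemma finite_segment: "finite (segment m w)"
  unfolding segment_def by simp

lemma finite_deep_descendants: "finite (deep_descendants m)"
  unfolding deep_descendants_def by simp

lemma card_deep_descendants: "card (deep_descendants m) = 2 ^ (m - 1)"
  unfolding deep_descendants_def by (simp add: algebra_simps)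

lemma deep_descendants_iff: "w \<in> deep_descendants m \<longleftrightarrow> w div 2 ^ (m - 1) = m"
proof
  show "w \<in> deep_descendants m \<Longrightarrow> w div 2 ^ (m - 1) = m"
    unfolding deep_descendants_def by (auto intro!: div_nat_eqI simp: algebra_simps)
  show "w div 2 ^ (m - 1) = m \<Longrightarrow> w \<in> deep_descendants m"
    unfolding deep_descendants_def
    by (metis atLeastLessThan_iff add.commute div_times_less_eq_dividend dividend_less_times_div
        mult.commute mult_Suc_right plus_1_eq_Suc pos2 zero_less_power)
qed

lemma segment_div_power:
  assumes "w \<in> deep_descendants m" and "t < m"
  shows "(w div 2 ^ t) div 2 ^ (m - 1 - t) = m"
proof -
  have "(2::nat) ^ (m - 1) = 2 ^ t * 2 ^ (m - 1 - t)"
    using assms(2) by (simp flip: power_add)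
  then show ?thesis
    using assms(1) unfolding deep_descendants_iff by (simp add: div_mult2_eq)
qed

lemma segment_pos:
  assumes "1 \<le> m" "w \<in> deep_descendants m" "u \<in> segment m w"
  shows "1 \<le> u"
proof -
  obtain t where "t < m" "u = w div 2 ^ t"
    using assms(3) unfolding segment_def by auto
  then have "u div 2 ^ (m - 1 - t) = m"
    using segment_div_power[OF assms(2)] by simp
  then show ?thesis
    using assms(1) by (cases u) auto
qed

lemma card_segment:
  assumes "1 \<le> m" "w \<in> deep_descendants m"
  shows "card (segment m w) = m"
proof -
  have pos: "0 < w div 2 ^ t" if "t < m" for t
    using segment_pos[OF assms] that unfolding segment_def by fastforce
  have decreasing: "w div 2 ^ t' < w div 2 ^ t" if "t < t'" "t' < m" for t t'
  proof -
    have "(2::nat) ^ t' = 2 ^ t * 2 ^ (t' - t)"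
      using that by (simp flip: power_add)
    then have "w div 2 ^ t' = (w div 2 ^ t) div 2 ^ (t' - t)"
      by (simp add: div_mult2_eq)
    also have "\<dots> < w div 2 ^ t"
      using pos[of t] that by (intro div_less_dividend one_less_power) simp_all
    finally show ?thesis .
  qed
  have "inj_on (\<lambda>t. w div 2 ^ t) {..<m}"
  proof (rule inj_onI)
    fix t t' assume "t \<in> {..<m}" "t' \<in> {..<m}" "w div 2 ^ t = w div 2 ^ t'"
    then show "t = t'"
      using decreasing[of t t'] decreasing[of t' t] by (cases t t' rule: linorder_cases) auto
  qed
  then show ?thesis
    unfolding segment_def by (simp add: card_image)
qed

lemma segment_off_branch:
  assumes "1 \<le> m" "m \<notin> range (branch b)" "w \<in> deep_descendants m" "u \<in> segment m w"
  shows "u \<notin> range (branch b)"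
proof
  assume "u \<in> range (branch b)"
  then obtain k where k: "u = branch b k"
    by auto
  obtain t where "t < m" "u = w div 2 ^ t"
    using assms(4) unfolding segment_def by auto
  then have "branch b k div 2 ^ (m - 1 - t) = m"
    using segment_div_power[OF assms(3)] k by simp
  then show False
    using ancestor_of_branch_in_branch assms(1,2) by blast
qed

lemma segment_along_branch:
  assumes "m = branch b k"
  defines "w \<equiv> branch b (k + (m - 1))"
  shows "w \<in> deep_descendants m" "segment m w \<subseteq> range (branch b)"
proof -
  show "w \<in> deep_descendants m"
    unfolding deep_descendants_iff w_def assms by (rule branch_add_div_power)
  have "w div 2 ^ t = branch b (k + (m - 1 - t))" if "t < m" for t
    using that branch_add_div_power[of b "k + (m - 1 - t)" t] unfolding w_def
    by (simp add: algebra_simps)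
  then show "segment m w \<subseteq> range (branch b)"
    unfolding segment_def by auto
qed

section \<open>The majority estimator\<close>

lemma qb_eq: "qb b m = (if m \<in> range (branch b) then 2/3 else 1/3)"
  unfolding qb_def by (simp add: image_iff eq_commute)

lemma qb_range: "0 \<le> qb b u" "qb b u \<le> 1"
  unfolding qb_def by auto

definition heavy :: "bool \<Rightarrow> real" where
  "heavy x = (if x then 9/4 else 1)"

text \<open>\<open>score heavy n P S = (9/4)^k\<close> where \<open>k\<close> counts the ones among the \<open>n * card P\<close> observed
  bits, so comparing it with \<open>(3/2)^(n * m)\<close> on a segment of length \<open>m\<close> is a majority vote.\<close>

definition majority_below :: "nat \<Rightarrow> nat \<Rightarrow> (nat \<Rightarrow> nat \<Rightarrow> bool) \<Rightarrow> bool" where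
  "majority_below n m S \<longleftrightarrow>
     (\<exists>w \<in> deep_descendants m. (3/2) ^ (n * m) \<le> score heavy n (segment m w) S)"

definition tree_estimator :: "nat \<Rightarrow> (nat \<Rightarrow> nat \<Rightarrow> bool) \<Rightarrow> nat \<Rightarrow> real" where
  "tree_estimator n S m = (if majority_below n m S then 2/3 else 1/3)"

lemma heavy_pos: "0 < heavy x"
  unfolding heavy_def by simp

lemma heavy_mult_flip: "heavy x * heavy (\<not> x) = 9/4"
  by (cases x) (simp_all add: heavy_def)

lemma score_heavy_mult_flip:
  "score heavy n P S * score (\<lambda>x. heavy (\<not> x)) n P S = (9/4) ^ (card P * n)"
proof -
  have "score heavy n P S * score (\<lambda>x. heavy (\<not> x)) n P S
      = (\<Prod>i<n. \<Prod>u\<in>P. heavy (S i u) * heavy (\<not> S i u))"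
    unfolding score_def by (simp add: prod.distrib)
  also have "\<dots> = (\<Prod>i<n. \<Prod>u\<in>P. 9/4)"
    by (simp only: heavy_mult_flip)
  finally show ?thesis
    by (simp only: prod_constant card_lessThan power_mult)
qed

lemma measurable_tree_estimator:
  assumes "1 \<le> m"
  shows "(\<lambda>S. tree_estimator n S m) \<in> borel_measurable (sample_space n)"
proof -
  have [measurable]: "score heavy n (segment m w) \<in> borel_measurable (sample_space n)"
    if "w \<in> deep_descendants m" for w
    using segment_pos[OF assms that] by (intro measurable_score) auto
  have "Measurable.pred (sample_space n) (majority_below n m)"
    unfolding majority_below_def
    by (intro pred_intros_finite(4) finite_deep_descendants) measurable
  then show ?thesis
    unfolding tree_estimator_def by measurable
qed

lemma power_17_12_div_power_3_2: "(17/12) ^ k / (3/2) ^ k = (17/18 :: real) ^ k"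
  by (simp flip: power_divide)

lemma emeasure_misestimate_on_branch:
  fixes n :: nat
  assumes "m = branch b k"
  defines "M \<equiv> PiM {..<n} (\<lambda>_. Prod (qb b))"
  shows "emeasure M {S \<in> space M. tree_estimator n S m \<noteq> qb b m} \<le> ennreal ((17/18) ^ (n * m))"
proof -
  let ?c = "(3/2 :: real) ^ (n * m)"
  obtain w where w: "w \<in> deep_descendants m" "segment m w \<subseteq> range (branch b)"
    using segment_along_branch[OF assms(1)] by blast
  let ?P = "segment m w"
  have m: "1 \<le> m"
    using assms(1) branch_bounds[of k b] one_le_power[of "2::nat" k] by linarith
  have P: "finite ?P" "?P \<subseteq> {1..}" "card ?P = m"
    using segment_pos[OF m w(1)] card_segment[OF m w(1)] by (auto simp: finite_segment)
  have c_sq: "(9/4) ^ (card ?P * n) = ?c * ?c"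
    using P(3) by (simp add: power_mult_distrib[symmetric] mult.commute)
  have "?c \<le> score (\<lambda>x. heavy (\<not> x)) n ?P S" if "score heavy n ?P S < ?c" for S
  proof (rule ccontr)
    assume "\<not> ?thesis"
    then have "score heavy n ?P S * score (\<lambda>x. heavy (\<not> x)) n ?P S < ?c * ?c"
      using that by (intro mult_strict_mono) (auto intro!: score_nonneg less_imp_le[OF heavy_pos])
    then show False
      using score_heavy_mult_flip[of n ?P S] c_sq by simp
  qed
  then have "{S \<in> space M. tree_estimator n S m \<noteq> qb b m}
      \<subseteq> {S \<in> space M. ?c \<le> score (\<lambda>x. heavy (\<not> x)) n ?P S}"
    using assms(1) w(1) by (auto simp: tree_estimator_def qb_eq majority_below_def not_le)
  then have "emeasure M {S \<in> space M. tree_estimator n S m \<noteq> qb b m}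
      \<le> emeasure M {S \<in> space M. ?c \<le> score (\<lambda>x. heavy (\<not> x)) n ?P S}"
    unfolding M_def by (intro emeasure_mono) (measurable, intro measurable_score_PiM_Prod P)
  also have "\<dots> \<le> ennreal ((17/12) ^ (m * n) / ?c)"
    unfolding M_def using P w(2)
    by (intro order.trans[OF emeasure_score_ge[OF qb_range, where p = "2/3"]])
      (auto simp: heavy_def qb_eq)
  finally show ?thesis
    by (simp add: mult.commute power_17_12_div_power_3_2)
qed

lemma emeasure_misestimate_off_branch:
  fixes n :: nat
  assumes m: "1 \<le> m" and off: "m \<notin> range (branch b)"
  defines "M \<equiv> PiM {..<n} (\<lambda>_. Prod (qb b))"
  shows "emeasure M {S \<in> space M. tree_estimator n S m \<noteq> qb b m}
           \<le> ennreal (2 ^ (m - 1) * (17/18) ^ (n * m))"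
proof -
  let ?c = "(3/2 :: real) ^ (n * m)"
  let ?A = "\<lambda>w. {S \<in> space M. ?c \<le> score heavy n (segment m w) S}"
  have P: "finite (segment m w)" "segment m w \<subseteq> {1..}" "card (segment m w) = m"
    if "w \<in> deep_descendants m" for w
    using segment_pos[OF m that] card_segment[OF m that] by (auto simp: finite_segment)
  have A_sets: "?A w \<in> sets M" if "w \<in> deep_descendants m" for w
    unfolding M_def by measurable (intro measurable_score_PiM_Prod P(2) that)
  have "{S \<in> space M. tree_estimator n S m \<noteq> qb b m} \<subseteq> (\<Union>w\<in>deep_descendants m. ?A w)"
    using off by (auto simp: tree_estimator_def qb_eq majority_below_def)
  then have "emeasure M {S \<in> space M. tree_estimator n S m \<noteq> qb b m}
      \<le> emeasure M (\<Union>w\<in>deep_descendants m. ?A w)"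
    using A_sets by (intro emeasure_mono) (auto simp: finite_deep_descendants)
  also have "\<dots> \<le> (\<Sum>w\<in>deep_descendants m. emeasure M (?A w))"
    using A_sets by (intro emeasure_subadditive_finite) (auto simp: finite_deep_descendants)
  also have "\<dots> \<le> (\<Sum>w\<in>deep_descendants m. ennreal ((17/12) ^ (m * n) / ?c))"
  proof (intro sum_mono)
    fix w assume w: "w \<in> deep_descendants m"
    have "\<And>u. u \<in> segment m w \<Longrightarrow> qb b u = 1/3"
      using segment_off_branch[OF m off w] by (simp add: qb_eq)
    then show "emeasure M (?A w) \<le> ennreal ((17/12) ^ (m * n) / ?c)"
      unfolding M_def using P[OF w]
      by (intro order.trans[OF emeasure_score_ge[OF qb_range, where p = "1/3"]])
        (auto simp: heavy_def)
  qed
  also have "\<dots> = ennreal (2 ^ (m - 1) * (17/18) ^ (n * m))"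
    by (simp add: card_deep_descendants ennreal_of_nat_eq_real_of_nat ennreal_mult'
        mult.commute[of m n] power_17_12_div_power_3_2)
  finally show ?thesis .
qed

lemma emeasure_misestimate:
  fixes n :: nat and b :: "nat \<Rightarrow> bool"
  assumes "1 \<le> m"
  defines "M \<equiv> PiM {..<n} (\<lambda>_. Prod (qb b))"
  shows "emeasure M {S \<in> space M. tree_estimator n S m \<noteq> qb b m} \<le> ennreal ((2 * (17/18) ^ n) ^ m)"
proof -
  have power_eq: "(2 * (17/18::real) ^ n) ^ m = 2 ^ m * (17/18) ^ (n * m)"
    by (simp add: power_mult_distrib power_mult)
  show ?thesis
  proof (cases "m \<in> range (branch b)")
    case True
    then obtain k where "m = branch b k"
      by auto
    moreover have "(17/18::real) ^ (n * m) \<le> 2 ^ m * (17/18) ^ (n * m)"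
      by simp
    ultimately show ?thesis
      unfolding M_def power_eq
      by (intro order.trans[OF emeasure_misestimate_on_branch ennreal_leI])
  next
    case False
    have "2 ^ (m - 1) * (17/18::real) ^ (n * m) \<le> 2 ^ m * (17/18) ^ (n * m)"
      by (intro mult_right_mono power_increasing) simp_all
    then show ?thesis
      unfolding M_def power_eq
      by (intro order.trans[OF emeasure_misestimate_off_branch[OF assms(1) False] ennreal_leI])
  qed
qed

lemma nn_integral_sup_error_le:
  fixes n :: nat
  defines "x \<equiv> 2 * (17/18) ^ n"
  assumes x: "x < 1"
  shows "(\<integral>\<^sup>+S. (\<Squnion>j\<in>{1..}. ennreal \<bar>tree_estimator n S j - Mean (Prod (qb b)) j\<bar>)
            \<partial>PiM {..<n} (\<lambda>_. Prod (qb b))) \<le> ennreal (x / (1 - x))"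
proof -
  let ?M = "PiM {..<n} (\<lambda>_. Prod (qb b))"
  let ?E = "\<lambda>j. {S \<in> space ?M. tree_estimator n S j \<noteq> qb b j}"
  have E_sets: "?E (Suc k) \<in> sets ?M" for k
  proof -
    have [measurable]: "(\<lambda>S. tree_estimator n S (Suc k)) \<in> borel_measurable ?M"
      by (intro measurable_PiM_Prod_sample_space measurable_tree_estimator) simp
    show ?thesis
      by measurable
  qed
  have "(\<Squnion>j\<in>{1..}. ennreal \<bar>tree_estimator n S j - Mean (Prod (qb b)) j\<bar>)
      \<le> (\<Sum>k. indicator (?E (Suc k)) S)" if "S \<in> space ?M" for S
  proof (rule SUP_least)
    fix j :: nat assume "j \<in> {1..}"
    then obtain k where j: "j = Suc k"
      using not0_implies_Suc by fastforce
    have "ennreal \<bar>tree_estimator n S j - Mean (Prod (qb b)) j\<bar> \<le> indicator (?E j) S"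
      using that Mean_Prod[of "qb b" j, OF qb_range] j
      by (auto simp: tree_estimator_def qb_eq indicator_def)
    also have "\<dots> \<le> (\<Sum>k. indicator (?E (Suc k)) S)"
      using sum_le_suminf[OF summableI, of "{k}" "\<lambda>k. indicator (?E (Suc k)) S"] j by simp
    finally show "ennreal \<bar>tree_estimator n S j - Mean (Prod (qb b)) j\<bar> \<le> (\<Sum>k. indicator (?E (Suc k)) S)" .
  qed
  then have "(\<integral>\<^sup>+S. (\<Squnion>j\<in>{1..}. ennreal \<bar>tree_estimator n S j - Mean (Prod (qb b)) j\<bar>) \<partial>?M)
      \<le> (\<integral>\<^sup>+S. (\<Sum>k. indicator (?E (Suc k)) S) \<partial>?M)"
    by (intro nn_integral_mono)
  also have "\<dots> = (\<Sum>k. emeasure ?M (?E (Suc k)))"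
    using E_sets by (simp add: nn_integral_suminf)
  also have "\<dots> \<le> (\<Sum>k. ennreal (x ^ Suc k))"
    unfolding x_def by (intro suminf_le summableI emeasure_misestimate) simp
  also have "\<dots> = ennreal (x / (1 - x))"
  proof -
    have "(\<lambda>k. x * x ^ k) sums (x * (1 / (1 - x)))"
      using x by (intro sums_mult geometric_sums) (simp add: x_def)
    then have "(\<lambda>k. ennreal (x ^ Suc k)) sums ennreal (x / (1 - x))"
      using x by (subst sums_ennreal) (auto simp: x_def)
    then show ?thesis
      by (simp add: sums_iff)
  qed
  finally show ?thesis .
qed

theorem mainTheorem7:
  shows "UME_learnable Q_tree"
  unfolding UME_learnable_def
proof (intro exI[of _ tree_estimator] conjI allI impI ballI)
  fix n j :: nat
  assume "1 \<le> j"
  then show "(\<lambda>S. tree_estimator n S j) \<in> borel_measurable (sample_space n)"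
    by (rule measurable_tree_estimator)
next
  fix n S j
  show "tree_estimator n S j \<in> {0..1}"
    unfolding tree_estimator_def by auto
next
  fix \<mu>
  assume "\<mu> \<in> Q_tree"
  then obtain b where \<mu>: "\<mu> = Prod (qb b)"
    unfolding Q_tree_def by auto
  define x where "x n = 2 * (17/18 :: real) ^ n" for n
  have x: "x \<longlonglongrightarrow> 0"
    unfolding x_def by (intro tendsto_mult_right_zero LIMSEQ_power_zero) simp
  then have "\<forall>\<^sub>F n in sequentially. x n < 1"
    by (rule order_tendstoD) simp
  then have bound: "\<forall>\<^sub>F n in sequentially. (\<integral>\<^sup>+S. (\<Squnion>j\<in>{1..}. ennreal \<bar>tree_estimator n S j - Mean \<mu> j\<bar>)
      \<partial>PiM {..<n} (\<lambda>_. \<mu>)) \<le> ennreal (x n / (1 - x n))"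
    unfolding \<mu> x_def by (rule eventually_mono) (rule nn_integral_sup_error_le)
  have "(\<lambda>n. ennreal (x n / (1 - x n))) \<longlonglongrightarrow> ennreal (0 / (1 - 0))"
    by (intro tendsto_ennrealI tendsto_intros x) simp
  then show "(\<lambda>n. \<integral>\<^sup>+S. (\<Squnion>j\<in>{1..}. ennreal \<bar>tree_estimator n S j - Mean \<mu> j\<bar>)
      \<partial>PiM {..<n} (\<lambda>_. \<mu>)) \<longlonglongrightarrow> 0"
    by (intro tendsto_sandwich[OF _ bound tendsto_const]) simp_all
qed

end
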